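(* For each $n\ge1$, the number of acyclic orientations of $\Sigma_n$ equals $H_n(2,0)=H_{2,n}(2,0)+3N_n(2,0)+M_n(2,0)$, and $$H_{n+1}(2,0)=(2H_n(2,0))^3-2\left(H_{2,n}(2,0)+N_n(2,0)\right)^3,$$ where, writing $H_2,N,M$ for $H_{2,n}(2,0),N_n(2,0),M_n(2,0)$, $$H_{2,n+1}(2,0)=2H_2^3+12H_2^2N+6H_2N^2,$$ $$N_{n+1}(2,0)=H_2^3+11H_2^2N+4H_2^2M+28H_2N^2+8H_2NM+14N^3+4N^2M,$$ $$M_{n+1}(2,0)=H_2^3+21H_2^2N+12H_2^2M+120H_2N^2+120H_2NM+24H_2M^2+172N^3+204N^2M+72NM^2+8M^3,$$ with $H_{2,1}(2,0)=2$, $N_1(2,0)=M_1(2,0)=1$.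
   Context: Graphs are finite. For a graph $G$, a spanning subgraph $A$ has vertex set $V(G)$ and edge set $E(A)\subseteq E(G)$; $k(A)$ is its number of components, $r(A)=|V(G)|-k(A)$, $n(A)=|E(A)|-r(A)$; the weight of $A$ is $(x-1)^{r(G)-r(A)}(y-1)^{n(A)}$ and the Tutte polynomial $T(G;x,y)$ is the sum of the weights of all spanning subgraphs. The graphs $\Sigma_n$ ($n\ge1$; Schreier graphs of the Hanoi Towers group $H^{(3)}$ with loops removed) each have three outmost vertices top, left, right: $\Sigma_1$ is the triangle $K_3$; $\Sigma_{n+1}$ is the disjoint union of three copies $G_1,G_2,G_3$ of $\Sigma_n$ together with three new edges joining left$(G_1)$ to top$(G_2)$, right$(G_1)$ to top$(G_3)$, and right$(G_2)$ to left$(G_3)$; its outmost vertices are top$(G_1)$, left$(G_2)$, right$(G_3)$. $H_n=T(\Sigma_n;x,y)$. $H_{2,n}$ (resp. $H_{1,n}$, $H_{0,n}$) is the sum of the weights of the spanning subgraphs of $\Sigma_n$ in which the three outmost vertices lie in one component (resp. left and right outmost in one component, top in another; resp. the three in three distinct components). $N_n=H_{1,n}/(x-1)$ and $M_n=H_{0,n}/(x-1)^2$, which are polynomials. An acyclic orientation is an orientation of all edges with no directed cycle. *)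

theory Defs
  imports Complex_Main
begin

text \<open>Copy G_1, G_2, G_3 of Sigma_n inside
Sigma_(n+1) consists of words starting with 0, 1, 2 respectively.\<close>

definition sigma_verts :: "nat \<Rightarrow> nat list set" where
  "sigma_verts n = {w. length w = n \<and> set w \<subseteq> {0,1,2}}"

definition top_v :: "nat \<Rightarrow> nat list" where "top_v n = replicate n 0"
definition left_v :: "nat \<Rightarrow> nat list" where "left_v n = replicate n 1"
definition right_v :: "nat \<Rightarrow> nat list" where "right_v n = replicate n 2"

fun sigma_edges :: "nat \<Rightarrow> nat list set set" where
  "sigma_edges 0 = {}"
| "sigma_edges (Suc 0) = {{[0],[1]}, {[0],[2]}, {[1],[2]}}"
| "sigma_edges (Suc (Suc n)) =
     (\<Union>i\<in>{0,1,2}. (`) ((#) i) ` sigma_edges (Suc n))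
     \<union> {{0 # left_v (Suc n), 1 # top_v (Suc n)},
        {0 # right_v (Suc n), 2 # top_v (Suc n)},
        {1 # right_v (Suc n), 2 # left_v (Suc n)}}"

definition conn :: "nat list set set \<Rightarrow> nat list \<Rightarrow> nat list \<Rightarrow> bool" where
  "conn A u v \<longleftrightarrow> (u, v) \<in> {(a, b). {a, b} \<in> A}\<^sup>*"

definition ncomp :: "nat \<Rightarrow> nat list set set \<Rightarrow> nat" where
  "ncomp n A = card ((\<lambda>u. {v \<in> sigma_verts n. conn A u v}) ` sigma_verts n)"

definition rk :: "nat \<Rightarrow> nat list set set \<Rightarrow> int" where
  "rk n A = int (card (sigma_verts n)) - int (ncomp n A)"

definition nul :: "nat \<Rightarrow> nat list set set \<Rightarrow> int" where
  "nul n A = int (card A) - rk n A"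

definition weight :: "nat \<Rightarrow> nat list set set \<Rightarrow> real \<Rightarrow> real \<Rightarrow> real" where
  "weight n A x y = (x - 1) powi (rk n (sigma_edges n) - rk n A) * (y - 1) powi (nul n A)"

text \<open>H_n = T(Sigma_n; x, y)\<close>
definition Hpoly :: "nat \<Rightarrow> real \<Rightarrow> real \<Rightarrow> real" where
  "Hpoly n x y = (\<Sum>A\<in>Pow (sigma_edges n). weight n A x y)"

definition H2poly :: "nat \<Rightarrow> real \<Rightarrow> real \<Rightarrow> real" where
  "H2poly n x y = (\<Sum>A\<in>{A\<in>Pow (sigma_edges n).
      conn A (top_v n) (left_v n) \<and> conn A (left_v n) (right_v n)}. weight n A x y)"

definition H1poly :: "nat \<Rightarrow> real \<Rightarrow> real \<Rightarrow> real" where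
  "H1poly n x y = (\<Sum>A\<in>{A\<in>Pow (sigma_edges n).
      conn A (left_v n) (right_v n) \<and> \<not> conn A (top_v n) (left_v n)}. weight n A x y)"

definition H0poly :: "nat \<Rightarrow> real \<Rightarrow> real \<Rightarrow> real" where
  "H0poly n x y = (\<Sum>A\<in>{A\<in>Pow (sigma_edges n).
      \<not> conn A (top_v n) (left_v n) \<and> \<not> conn A (left_v n) (right_v n)
      \<and> \<not> conn A (top_v n) (right_v n)}. weight n A x y)"

definition Npoly :: "nat \<Rightarrow> real \<Rightarrow> real \<Rightarrow> real" where
  "Npoly n x y = H1poly n x y / (x - 1)"

definition Mpoly :: "nat \<Rightarrow> real \<Rightarrow> real \<Rightarrow> real" where
  "Mpoly n x y = H0poly n x y / (x - 1)^2"

definition acyclic_orientations :: "nat \<Rightarrow> (nat list \<times> nat list) set set" where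
  "acyclic_orientations n = {R. R \<subseteq> {(u, v). {u, v} \<in> sigma_edges n}
      \<and> (\<forall>u v. {u, v} \<in> sigma_edges n \<longrightarrow> ((u, v) \<in> R \<longleftrightarrow> (v, u) \<notin> R))
      \<and> acyclic R}"

end

theory Submission
  imports Defs
begin

text \<open>(1) Stanley's theorem for finite simple graphs: the number of acyclic orientations equals
  the signed sum \<open>\<Sum>\<^sub>A (-1)^(|A| + |V| + k(A))\<close> over all spanning subgraphs \<open>A\<close>. It is proved by
  deletion--contraction; to keep the vertex set fixed during the induction, contraction is
  modelled by a vertex map \<open>\<phi>\<close> identifying vertices. At \<open>(x, y) = (2, 0)\<close> the Tutte weight of
  \<open>A\<close> is exactly this sign, so \<open>T(G; 2, 0)\<close> counts acyclic orientations.

  (2) A spanning subgraph of \<open>\<Sigma>\<^sub>n\<^sub>+\<^sub>1\<close> is a triple of subgraphs of the three copies of \<open>\<Sigma>\<^sub>n\<close>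
  together with a subset of the three bridges. Its sign and its boundary type (which of the
  three outmost vertices are connected; five possibilities) depend only on the types and
  signs of the three parts and on the bridges. This dependence is a finite computation on the
  nine outmost vertices of the copies, carried out by a small union--find procedure.

  (3) Hence the signed sums \<open>type_sum n k\<close> over the subgraphs of boundary type \<open>k\<close> satisfy the
  cubic recurrence \<open>type_sum (n+1) k = transfer k (type_sum n)\<close>, whose coefficients are
  evaluated by simplification. Since \<open>H\<^sub>2\<^sub>,\<^sub>n(2,0)\<close>, \<open>N\<^sub>n(2,0)\<close>, \<open>M\<^sub>n(2,0)\<close> are the type sums for the
  types "all connected", "left--right only" and "none", the theorem follows.\<close>

section \<open>Acyclic orientations and the signed subgraph sum\<close>

definition edge_rel :: "'a set set \<Rightarrow> ('a \<times> 'a) set" where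
  "edge_rel A = {(a, b). {a, b} \<in> A}"

definition map_rel :: "('a \<Rightarrow> 'b) \<Rightarrow> ('a \<times> 'a) set \<Rightarrow> ('b \<times> 'b) set" where
  "map_rel f R = (\<lambda>(a, b). (f a, f b)) ` R"

definition orientations :: "'a set set \<Rightarrow> ('a \<times> 'a) set set" where
  "orientations E = {R. R \<subseteq> edge_rel E \<and> (\<forall>u v. {u, v} \<in> E \<longrightarrow> ((u, v) \<in> R \<longleftrightarrow> (v, u) \<notin> R))}"

text \<open>Orientations of \<open>E\<close> that become acyclic after identifying vertices along \<open>\<phi>\<close>; these
  are the acyclic orientations of the multigraph obtained from \<open>E\<close> by contracting \<open>\<phi>\<close>.\<close>

definition acyclic_orients :: "'a set set \<Rightarrow> ('a \<Rightarrow> 'a) \<Rightarrow> ('a \<times> 'a) set set" where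
  "acyclic_orients E \<phi> = {R \<in> orientations E. acyclic (map_rel \<phi> R)}"

definition quot_comps :: "('a \<Rightarrow> 'a) \<Rightarrow> 'a set \<Rightarrow> 'a set set \<Rightarrow> nat" where
  "quot_comps \<phi> V A = card ((\<lambda>x. {y \<in> \<phi> ` V. (x, y) \<in> (map_rel \<phi> (edge_rel A))\<^sup>*}) ` (\<phi> ` V))"

text \<open>The signed subgraph sum, i.e. \<open>(-1)^|V| \<chi>(-1)\<close> for the chromatic polynomial \<open>\<chi>\<close> of the
  contracted graph.\<close>

definition sign_sum :: "'a set set \<Rightarrow> ('a \<Rightarrow> 'a) \<Rightarrow> 'a set \<Rightarrow> int" where
  "sign_sum E \<phi> V = (\<Sum>A\<in>Pow E. (-1::int) ^ (card A + card (\<phi> ` V) + quot_comps \<phi> V A))"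

definition simple_edges :: "'a set \<Rightarrow> 'a set set \<Rightarrow> bool" where
  "simple_edges V E \<longleftrightarrow> (\<forall>e\<in>E. \<exists>u v. u \<noteq> v \<and> u \<in> V \<and> v \<in> V \<and> e = {u, v})"

lemma edge_rel_insert: "edge_rel (insert {u, v} A) = insert (u, v) (insert (v, u) (edge_rel A))"
  unfolding edge_rel_def by (auto simp: doubleton_eq_iff)

lemma sym_edge_rel: "sym (edge_rel A)"
  unfolding edge_rel_def sym_def by (auto simp: insert_commute)

lemma map_rel_insert: "map_rel f (insert (a, b) R) = insert (f a, f b) (map_rel f R)"
  by (simp add: map_rel_def)

lemma map_rel_comp: "map_rel (g \<circ> f) R = map_rel g (map_rel f R)"
  unfolding map_rel_def by force

lemma map_rel_id: "map_rel id R = R"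
  unfolding map_rel_def by force

lemma sym_map_rel: "sym R \<Longrightarrow> sym (map_rel f R)"
  unfolding sym_def map_rel_def by fast

lemma map_rel_rtrancl: "(x, y) \<in> R\<^sup>* \<Longrightarrow> (f x, f y) \<in> (map_rel f R)\<^sup>*"
proof (induction rule: rtrancl_induct)
  case (step y z)
  then have "(f y, f z) \<in> map_rel f R" unfolding map_rel_def by force
  with step.IH show ?case by (rule rtrancl_into_rtrancl)
qed simp

lemma map_rel_trancl: "(x, y) \<in> R\<^sup>+ \<Longrightarrow> (f x, f y) \<in> (map_rel f R)\<^sup>+"
proof (induction rule: trancl_induct)
  case (base y)
  then show ?case unfolding map_rel_def by force
next
  case (step y z)
  then have "(f y, f z) \<in> map_rel f R" unfolding map_rel_def by force
  with step.IH show ?case by (rule trancl_into_trancl)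
qed

lemma rtrancl_insert_loop: "(insert (a, a) X)\<^sup>* = X\<^sup>*"
  unfolding rtrancl_insert by (auto intro: rtrancl_trans)

definition merge :: "'a \<Rightarrow> 'a \<Rightarrow> 'a \<Rightarrow> 'a" where
  "merge a b z = (if z = b then a else z)"

lemma merge_eq: "merge a b x = merge a b y \<Longrightarrow> x = y \<or> (x = a \<and> y = b) \<or> (x = b \<and> y = a)"
  unfolding merge_def by (auto split: if_splits)

lemma merge_image_card:
  assumes "finite W" "a \<in> W" "b \<in> W" "a \<noteq> b"
  shows "card (merge a b ` W) + 1 = card W"
proof -
  have "merge a b ` W = W - {b}"
    using assms unfolding merge_def by (auto simp: image_iff)
  then show ?thesis
    using assms by (simp add: card_Diff_singleton) (metis Suc_pred card_gt_0_iff empty_iff)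
qed

lemma merge_rtrancl_lift:
  assumes "(x', y') \<in> (map_rel (merge a b) D)\<^sup>*"
  shows "merge a b x = x' \<Longrightarrow> merge a b y = y' \<Longrightarrow> (x, y) \<in> (insert (a, b) (insert (b, a) D))\<^sup>*"
  using assms
proof (induction arbitrary: y rule: rtrancl_induct)
  case base
  then have "x = y \<or> (x = a \<and> y = b) \<or> (x = b \<and> y = a)" using merge_eq by metis
  then show ?case by auto
next
  case (step z' w)
  from step(2) obtain p q where pq: "(p, q) \<in> D" "merge a b p = z'" "merge a b q = w"
    unfolding map_rel_def by auto
  have "(x, p) \<in> (insert (a, b) (insert (b, a) D))\<^sup>*" using step pq by blast
  moreover have "q = y \<or> (q = a \<and> y = b) \<or> (q = b \<and> y = a)" using merge_eq pq step(5) by metis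
  then have "(q, y) \<in> (insert (a, b) (insert (b, a) D))\<^sup>*" by auto
  moreover have "(p, q) \<in> (insert (a, b) (insert (b, a) D))\<^sup>*" using pq by auto
  ultimately show ?case by (meson rtrancl_trans)
qed

lemma acyclic_merge_iff:
  assumes ab: "a \<noteq> b"
  shows "acyclic (map_rel (merge a b) D) \<longleftrightarrow> acyclic D \<and> (a, b) \<notin> D\<^sup>* \<and> (b, a) \<notin> D\<^sup>*"
proof
  assume ac: "acyclic (map_rel (merge a b) D)"
  have no_path: "(c, d) \<notin> D\<^sup>*" if "{c, d} = {a, b}" for c d
  proof
    assume "(c, d) \<in> D\<^sup>*"
    then have "(c, d) \<in> D\<^sup>+" using ab that by (metis doubleton_eq_iff rtranclD)
    then have "(merge a b c, merge a b d) \<in> (map_rel (merge a b) D)\<^sup>+" by (rule map_rel_trancl)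
    then show False using ac ab that unfolding acyclic_def merge_def by (auto simp: doubleton_eq_iff)
  qed
  have "acyclic D" using ac map_rel_trancl unfolding acyclic_def by metis
  with no_path[of a b] no_path[of b a] show "acyclic D \<and> (a, b) \<notin> D\<^sup>* \<and> (b, a) \<notin> D\<^sup>*"
    by (auto simp: insert_commute)
next
  assume h: "acyclic D \<and> (a, b) \<notin> D\<^sup>* \<and> (b, a) \<notin> D\<^sup>*"
  show "acyclic (map_rel (merge a b) D)"
    unfolding acyclic_def
  proof (intro allI notI)
    fix c assume "(c, c) \<in> (map_rel (merge a b) D)\<^sup>+"
    then obtain z where cz: "(c, z) \<in> map_rel (merge a b) D" "(z, c) \<in> (map_rel (merge a b) D)\<^sup>*"
      by (meson tranclD)
    from cz(1) obtain p q where pq: "(p, q) \<in> D" "merge a b p = c" "merge a b q = z"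
      unfolding map_rel_def by auto
    have "(q, p) \<in> (insert (a, b) (insert (b, a) D))\<^sup>*"
      using merge_rtrancl_lift[OF cz(2) pq(3) pq(2)] .
    then have "(q, p) \<in> D\<^sup>* \<or> (((q, a) \<in> D\<^sup>* \<or> (q, b) \<in> D\<^sup>*) \<and> ((a, p) \<in> D\<^sup>* \<or> (b, p) \<in> D\<^sup>*))"
      unfolding rtrancl_insert by auto
    moreover have "(x, w) \<in> D\<^sup>+" if "(x, p) \<in> D\<^sup>*" "(q, w) \<in> D\<^sup>*" for x w
      using that pq(1) by (metis rtrancl_into_trancl1 trancl_rtrancl_trancl)
    ultimately show False
      using h unfolding acyclic_def by (metis rtrancl.rtrancl_refl trancl_into_rtrancl)
  qed
qed

lemma card_image_same_kernel:
  assumes "\<And>x y. x \<in> W \<Longrightarrow> y \<in> W \<Longrightarrow> f x = f y \<longleftrightarrow> g x = g y"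
  shows "card (f ` W) = card (g ` W)"
proof -
  have "bij_betw (\<lambda>z. g (inv_into W f z)) (f ` W) (g ` W)"
  proof (rule bij_betwI')
    fix z1 z2 assume "z1 \<in> f ` W" "z2 \<in> f ` W"
    then show "(g (inv_into W f z1) = g (inv_into W f z2)) = (z1 = z2)"
      using assms by (metis f_inv_into_f inv_into_into)
  next
    fix z assume "z \<in> f ` W"
    then show "g (inv_into W f z) \<in> g ` W" by (simp add: inv_into_into)
  next
    fix y assume "y \<in> g ` W"
    then obtain x where x: "x \<in> W" "y = g x" by auto
    have "g (inv_into W f (f x)) = g x"
      using assms x by (metis f_inv_into_f image_eqI inv_into_into)
    with x show "\<exists>z\<in>f ` W. y = g (inv_into W f z)" by (metis image_eqI)
  qed
  then show ?thesis by (rule bij_betw_same_card)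
qed

lemma reach_class_eq_iff:
  assumes "sym R" "y \<in> W"
  shows "{z \<in> W. (x, z) \<in> R\<^sup>*} = {z \<in> W. (y, z) \<in> R\<^sup>*} \<longleftrightarrow> (x, y) \<in> R\<^sup>*"
proof
  assume xy: "(x, y) \<in> R\<^sup>*"
  then have "(y, x) \<in> R\<^sup>*" using sym_rtrancl[OF assms(1)] unfolding sym_def by blast
  with xy show "{z \<in> W. (x, z) \<in> R\<^sup>*} = {z \<in> W. (y, z) \<in> R\<^sup>*}"
    by (auto intro: rtrancl_trans)
qed (use assms(2) in blast)

lemma quot_comps_insert:
  assumes ne: "\<phi> u \<noteq> \<phi> v"
  shows "quot_comps \<phi> V (insert {u, v} A) = quot_comps (merge (\<phi> u) (\<phi> v) \<circ> \<phi>) V A"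
proof -
  define m where "m = merge (\<phi> u) (\<phi> v)"
  define W where "W = \<phi> ` V"
  define R where "R = map_rel \<phi> (edge_rel A)"
  define R2 where "R2 = insert (\<phi> u, \<phi> v) (insert (\<phi> v, \<phi> u) R)"
  have symR: "sym R" unfolding R_def by (rule sym_map_rel[OF sym_edge_rel])
  have symR2: "sym R2" using symR unfolding R2_def sym_def by auto
  have symM: "sym (map_rel m R)" by (rule sym_map_rel[OF symR])
  have lhs: "quot_comps \<phi> V (insert {u, v} A) = card ((\<lambda>x. {y \<in> W. (x, y) \<in> R2\<^sup>*}) ` W)"
    unfolding quot_comps_def W_def R2_def R_def by (simp add: edge_rel_insert map_rel_insert)
  have rhs: "quot_comps (m \<circ> \<phi>) V A = card (((\<lambda>x. {y \<in> m ` W. (x, y) \<in> (map_rel m R)\<^sup>*}) \<circ> m) ` W)"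
    unfolding quot_comps_def W_def R_def map_rel_comp by (simp add: image_comp)
  have reach: "(x, y) \<in> R2\<^sup>* \<longleftrightarrow> (m x, m y) \<in> (map_rel m R)\<^sup>*" for x y
  proof
    assume "(x, y) \<in> R2\<^sup>*"
    then have "(m x, m y) \<in> (map_rel m R2)\<^sup>*" by (rule map_rel_rtrancl)
    moreover have "map_rel m R2 = insert (\<phi> u, \<phi> u) (map_rel m R)"
      unfolding R2_def m_def by (auto simp: map_rel_insert merge_def)
    ultimately show "(m x, m y) \<in> (map_rel m R)\<^sup>*" by (simp add: rtrancl_insert_loop)
  next
    assume "(m x, m y) \<in> (map_rel m R)\<^sup>*"
    then show "(x, y) \<in> R2\<^sup>*" unfolding R2_def m_def using merge_rtrancl_lift by metis
  qed
  have "card ((\<lambda>x. {y \<in> W. (x, y) \<in> R2\<^sup>*}) ` W) =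
        card (((\<lambda>x. {y \<in> m ` W. (x, y) \<in> (map_rel m R)\<^sup>*}) \<circ> m) ` W)"
  proof (rule card_image_same_kernel)
    fix x y assume "x \<in> W" "y \<in> W"
    then show "({z \<in> W. (x, z) \<in> R2\<^sup>*} = {z \<in> W. (y, z) \<in> R2\<^sup>*}) =
      (((\<lambda>x. {y \<in> m ` W. (x, y) \<in> (map_rel m R)\<^sup>*}) \<circ> m) x =
       ((\<lambda>x. {y \<in> m ` W. (x, y) \<in> (map_rel m R)\<^sup>*}) \<circ> m) y)"
      using reach_class_eq_iff[OF symR2] reach_class_eq_iff[OF symM, of "m y" "m ` W"] reach
      by simp
  qed
  then show ?thesis using lhs rhs unfolding m_def by simp
qed

lemma sum_Pow_insert:
  assumes "finite E" "e \<notin> E"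
  shows "(\<Sum>A\<in>Pow (insert e E). f A) = (\<Sum>A\<in>Pow E. f A) + (\<Sum>A\<in>Pow E. f (insert e A))"
proof -
  have inj: "inj_on (insert e) (Pow E)" using assms(2) unfolding inj_on_def
    by (metis PowD insert_ident subset_iff)
  have "Pow E \<inter> insert e ` Pow E = {}" using assms(2) by auto
  then have "(\<Sum>A\<in>Pow (insert e E). f A) = (\<Sum>A\<in>Pow E. f A) + (\<Sum>A\<in>insert e ` Pow E. f A)"
    unfolding Pow_insert using assms(1) by (simp add: sum.union_disjoint)
  also have "(\<Sum>A\<in>insert e ` Pow E. f A) = (\<Sum>A\<in>Pow E. f (insert e A))"
    using sum.reindex[OF inj] by simp
  finally show ?thesis .
qed

lemma finite_orientations:
  assumes "finite V" "simple_edges V E"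
  shows "finite (orientations E)"
proof -
  have "edge_rel E \<subseteq> V \<times> V"
  proof
    fix p assume "p \<in> edge_rel E"
    then obtain a b where ab: "p = (a, b)" "{a, b} \<in> E" unfolding edge_rel_def by auto
    then obtain u v where "{a, b} = {u, v}" "u \<in> V" "v \<in> V"
      using assms(2) unfolding simple_edges_def by blast
    then show "p \<in> V \<times> V" using ab(1) by (auto simp: doubleton_eq_iff)
  qed
  then have "orientations E \<subseteq> Pow (V \<times> V)" unfolding orientations_def by auto
  then show ?thesis using assms(1) by (meson finite_Pow_iff finite_SigmaI finite_subset)
qed

lemma orientation_avoids:
  assumes "R \<in> orientations E" "{u, v} \<notin> E"
  shows "(u, v) \<notin> R" "(v, u) \<notin> R"
proof -
  have "(u, v) \<notin> edge_rel E" "(v, u) \<notin> edge_rel E"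
    using assms(2) unfolding edge_rel_def by (auto simp: insert_commute)
  then show "(u, v) \<notin> R" "(v, u) \<notin> R" using assms(1) unfolding orientations_def by auto
qed

lemma orientation_restrict:
  assumes R: "R \<in> orientations (insert {u, v} E)" and new: "{u, v} \<notin> E"
  shows "R - {(u, v), (v, u)} \<in> orientations E"
  unfolding orientations_def
proof (intro CollectI conjI allI impI)
  show "R - {(u, v), (v, u)} \<subseteq> edge_rel E"
  proof
    fix p assume p: "p \<in> R - {(u, v), (v, u)}"
    obtain x y where xy: "p = (x, y)" by force
    have "{x, y} \<in> insert {u, v} E" using R p unfolding orientations_def edge_rel_def xy by auto
    moreover have "{x, y} \<noteq> {u, v}" using p unfolding xy by (auto simp: doubleton_eq_iff)
    ultimately show "p \<in> edge_rel E" unfolding edge_rel_def xy by simp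
  qed
next
  fix x y assume xy: "{x, y} \<in> E"
  then have "{x, y} \<noteq> {u, v}" "{y, x} \<noteq> {u, v}" using new by (auto simp: insert_commute)
  then have "(x, y) \<notin> {(u, v), (v, u)}" "(y, x) \<notin> {(u, v), (v, u)}"
    by (auto simp: doubleton_eq_iff)
  moreover have "(x, y) \<in> R \<longleftrightarrow> (y, x) \<notin> R" using R xy unfolding orientations_def by auto
  ultimately show "(x, y) \<in> R - {(u, v), (v, u)} \<longleftrightarrow> (y, x) \<notin> R - {(u, v), (v, u)}" by auto
qed

lemma orientation_extend:
  assumes R: "R \<in> orientations E" and new: "{u, v} \<notin> E" "u \<noteq> v" and p: "p = (u, v) \<or> p = (v, u)"
  shows "insert p R \<in> orientations (insert {u, v} E)"
  unfolding orientations_def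
proof (intro CollectI conjI allI impI)
  show "insert p R \<subseteq> edge_rel (insert {u, v} E)"
    using R p unfolding orientations_def edge_rel_def by (auto simp: insert_commute)
next
  fix x y assume xy: "{x, y} \<in> insert {u, v} E"
  show "(x, y) \<in> insert p R \<longleftrightarrow> (y, x) \<notin> insert p R"
  proof (cases "{x, y} = {u, v}")
    case True
    then have "(x, y) = (u, v) \<or> (x, y) = (v, u)" by (auto simp: doubleton_eq_iff)
    then show ?thesis using orientation_avoids[OF R new(1)] p new(2) by auto
  next
    case False
    then have "p \<noteq> (x, y)" "p \<noteq> (y, x)" using p by (auto simp: doubleton_eq_iff)
    moreover have "{x, y} \<in> E" using xy False by auto
    then have "(x, y) \<in> R \<longleftrightarrow> (y, x) \<notin> R" using R unfolding orientations_def by blast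
    ultimately show ?thesis by auto
  qed
qed

lemma orientations_insert:
  assumes "u \<noteq> v" "{u, v} \<notin> E"
  shows "orientations (insert {u, v} E) = insert (u, v) ` orientations E \<union> insert (v, u) ` orientations E"
proof
  show "orientations (insert {u, v} E) \<subseteq> insert (u, v) ` orientations E \<union> insert (v, u) ` orientations E"
  proof
    fix R assume R: "R \<in> orientations (insert {u, v} E)"
    then have "(u, v) \<in> R \<longleftrightarrow> (v, u) \<notin> R" unfolding orientations_def by auto
    then have "R = insert (u, v) (R - {(u, v), (v, u)}) \<or> R = insert (v, u) (R - {(u, v), (v, u)})" by auto
    with orientation_restrict[OF R assms(2)]
    show "R \<in> insert (u, v) ` orientations E \<union> insert (v, u) ` orientations E" by blast
  qed
  show "insert (u, v) ` orientations E \<union> insert (v, u) ` orientations E \<subseteq> orientations (insert {u, v} E)"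
    using orientation_extend[OF _ assms(2,1)] by blast
qed

lemma acyclic_not_both_ways:
  assumes "acyclic D" "a \<noteq> b"
  shows "\<not> ((a, b) \<in> D\<^sup>* \<and> (b, a) \<in> D\<^sup>*)"
proof
  assume paths: "(a, b) \<in> D\<^sup>* \<and> (b, a) \<in> D\<^sup>*"
  then have "(a, b) \<in> D\<^sup>+" using assms(2) by (metis rtranclD)
  with paths have "(a, a) \<in> D\<^sup>+" by (meson trancl_rtrancl_trancl)
  then show False using assms(1) unfolding acyclic_def by blast
qed

lemma acyclic_orients_insert:
  assumes "u \<noteq> v" "{u, v} \<notin> E"
  shows "acyclic_orients (insert {u, v} E) \<phi> =
    insert (u, v) ` {R \<in> orientations E. acyclic (map_rel \<phi> R) \<and> (\<phi> v, \<phi> u) \<notin> (map_rel \<phi> R)\<^sup>*} \<union>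
    insert (v, u) ` {R \<in> orientations E. acyclic (map_rel \<phi> R) \<and> (\<phi> u, \<phi> v) \<notin> (map_rel \<phi> R)\<^sup>*}"
proof -
  have filter_image: "{R \<in> insert p ` S. P R} = insert p ` {R \<in> S. P (insert p R)}" for p S P
    by auto
  have "acyclic_orients (insert {u, v} E) \<phi> =
      {R \<in> insert (u, v) ` orientations E. acyclic (map_rel \<phi> R)} \<union>
      {R \<in> insert (v, u) ` orientations E. acyclic (map_rel \<phi> R)}"
    unfolding acyclic_orients_def orientations_insert[OF assms] by blast
  then show ?thesis unfolding filter_image map_rel_insert acyclic_insert by simp
qed

text \<open>Deletion--contraction for acyclic orientations: an edge joining two identified vertices
  admits no acyclic orientation; otherwise the count splits into the counts for \<open>E\<close> and for
  \<open>E\<close> with \<open>{u,v}\<close> contracted, because \<open>X1 \<union> X2\<close> below are the acyclic orientations of \<open>E\<close>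
  and \<open>X1 \<inter> X2\<close> those surviving the contraction.\<close>

lemma card_acyclic_orients_insert:
  assumes "finite V" "simple_edges V E" "u \<noteq> v" "{u, v} \<notin> E"
  shows "card (acyclic_orients (insert {u, v} E) \<phi>) =
    (if \<phi> u = \<phi> v then 0
     else card (acyclic_orients E \<phi>) + card (acyclic_orients E (merge (\<phi> u) (\<phi> v) \<circ> \<phi>)))"
proof -
  define X1 where "X1 = {R \<in> orientations E. acyclic (map_rel \<phi> R) \<and> (\<phi> v, \<phi> u) \<notin> (map_rel \<phi> R)\<^sup>*}"
  define X2 where "X2 = {R \<in> orientations E. acyclic (map_rel \<phi> R) \<and> (\<phi> u, \<phi> v) \<notin> (map_rel \<phi> R)\<^sup>*}"
  have avoid: "(u, v) \<notin> R \<and> (v, u) \<notin> R" if "R \<in> orientations E" for R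
    using orientation_avoids[OF that assms(4)] by blast
  have inj: "inj_on (insert p) X" if "\<forall>R\<in>X. p \<notin> R" for p and X :: "('a \<times> 'a) set set"
    using that unfolding inj_on_def by (metis Diff_insert_absorb)
  have inj1: "inj_on (insert (u, v)) X1" by (rule inj) (use avoid in \<open>auto simp: X1_def\<close>)
  have inj2: "inj_on (insert (v, u)) X2" by (rule inj) (use avoid in \<open>auto simp: X2_def\<close>)
  have disj: "insert (u, v) ` X1 \<inter> insert (v, u) ` X2 = {}"
    using avoid assms(3) unfolding X1_def X2_def by auto
  have fin: "finite X1" "finite X2"
    using finite_orientations[OF assms(1,2)] unfolding X1_def X2_def by auto
  have card_split: "card (acyclic_orients (insert {u, v} E) \<phi>) = card X1 + card X2"
    unfolding acyclic_orients_insert[OF assms(3,4)] X1_def[symmetric] X2_def[symmetric]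
    using disj fin by (simp add: card_Un_disjoint card_image inj1 inj2)
  show ?thesis
  proof (cases "\<phi> u = \<phi> v")
    case True
    then have "X1 = {}" "X2 = {}" unfolding X1_def X2_def by auto
    then show ?thesis using card_split True by simp
  next
    case False
    have "\<not> ((\<phi> u, \<phi> v) \<in> D\<^sup>* \<and> (\<phi> v, \<phi> u) \<in> D\<^sup>*)" if "acyclic D" for D
      using acyclic_not_both_ways[OF that False] .
    then have "X1 \<union> X2 = acyclic_orients E \<phi>"
      unfolding X1_def X2_def acyclic_orients_def by blast
    moreover have "X1 \<inter> X2 = acyclic_orients E (merge (\<phi> u) (\<phi> v) \<circ> \<phi>)"
      unfolding X1_def X2_def acyclic_orients_def map_rel_comp acyclic_merge_iff[OF False] by blast
    ultimately show ?thesis using card_split card_Un_Int[OF fin] False by simp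
  qed
qed

lemma sign_sum_insert:
  assumes "finite V" "finite E" "u \<in> V" "v \<in> V" "{u, v} \<notin> E"
  shows "sign_sum (insert {u, v} E) \<phi> V =
    (if \<phi> u = \<phi> v then 0 else sign_sum E \<phi> V + sign_sum E (merge (\<phi> u) (\<phi> v) \<circ> \<phi>) V)"
proof -
  let ?s = "\<lambda>\<psi> A. (-1::int) ^ (card A + card (\<psi> ` V) + quot_comps \<psi> V A)"
  have split: "sign_sum (insert {u, v} E) \<phi> V = (\<Sum>A\<in>Pow E. ?s \<phi> A + ?s \<phi> (insert {u, v} A))"
    unfolding sign_sum_def sum_Pow_insert[OF assms(2,5)] sum.distrib ..
  have card_ins: "card (insert {u, v} A) = Suc (card A)" if "A \<in> Pow E" for A
  proof -
    have "finite A" "{u, v} \<notin> A" using that assms(2,5) by (auto intro: finite_subset)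
    then show ?thesis by simp
  qed
  show ?thesis
  proof (cases "\<phi> u = \<phi> v")
    case True
    have "quot_comps \<phi> V (insert {u, v} A) = quot_comps \<phi> V A" for A
      unfolding quot_comps_def edge_rel_insert map_rel_insert True rtrancl_insert_loop ..
    then have "?s \<phi> A + ?s \<phi> (insert {u, v} A) = 0" if "A \<in> Pow E" for A
      using card_ins[OF that] by simp
    then show ?thesis unfolding split using True by simp
  next
    case False
    define \<psi> where "\<psi> = merge (\<phi> u) (\<phi> v) \<circ> \<phi>"
    have card_img: "card (\<psi> ` V) + 1 = card (\<phi> ` V)"
      unfolding \<psi>_def image_comp[symmetric] using False assms(1,3,4) by (intro merge_image_card) auto
    have "?s \<phi> (insert {u, v} A) = ?s \<psi> A" if "A \<in> Pow E" for A
    proof -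
      have "quot_comps \<phi> V (insert {u, v} A) = quot_comps \<psi> V A"
        unfolding \<psi>_def by (rule quot_comps_insert[of \<phi> u v, OF False])
      then have "card (insert {u, v} A) + card (\<phi> ` V) + quot_comps \<phi> V (insert {u, v} A) =
          (card A + card (\<psi> ` V) + quot_comps \<psi> V A) + 2"
        using card_ins[OF that] card_img by simp
      then show ?thesis by simp
    qed
    then have "(\<Sum>A\<in>Pow E. ?s \<phi> (insert {u, v} A)) = sign_sum E \<psi> V"
      unfolding sign_sum_def by (intro sum.cong) auto
    then show ?thesis
      using False unfolding split sum.distrib \<psi>_def[symmetric] sign_sum_def[of E \<phi> V] by simp
  qed
qed

theorem card_acyclic_orients_sign_sum:
  assumes "finite V" "finite E" "simple_edges V E"
  shows "int (card (acyclic_orients E \<phi>)) = sign_sum E \<phi> V"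
  using assms(2,3)
proof (induction E arbitrary: \<phi> rule: finite_induct)
  case empty
  have "acyclic_orients {} \<phi> = {{}}"
    unfolding acyclic_orients_def orientations_def edge_rel_def by (auto simp: acyclic_def map_rel_def)
  moreover have "(\<lambda>x. {y \<in> \<phi> ` V. (x, y) \<in> (map_rel \<phi> (edge_rel {}))\<^sup>*}) ` (\<phi> ` V) = (\<lambda>x. {x}) ` (\<phi> ` V)"
    unfolding map_rel_def edge_rel_def by (auto simp: image_iff)
  then have "quot_comps \<phi> V {} = card (\<phi> ` V)"
    unfolding quot_comps_def by (simp add: card_image)
  ultimately show ?case unfolding sign_sum_def by simp
next
  case (insert e E \<phi>)
  obtain u v where uv: "u \<noteq> v" "u \<in> V" "v \<in> V" "e = {u, v}"
    using insert.prems unfolding simple_edges_def by auto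
  have E: "simple_edges V E" using insert.prems unfolding simple_edges_def by auto
  define \<psi> where "\<psi> = merge (\<phi> u) (\<phi> v) \<circ> \<phi>"
  have "{u, v} \<notin> E" using insert.hyps(2) uv(4) by simp
  note card_rec = card_acyclic_orients_insert[OF assms(1) E uv(1) this, of \<phi>, folded \<psi>_def]
    and sum_rec = sign_sum_insert[OF assms(1) insert.hyps(1) uv(2,3) this, of \<phi>, folded \<psi>_def]
  show ?case
    unfolding uv(4) card_rec sum_rec using insert.IH[OF E, of \<phi>] insert.IH[OF E, of \<psi>] by simp
qed

section \<open>Connectivity in spanning subgraphs\<close>

lemma conn_rel: "conn A u v \<longleftrightarrow> (u, v) \<in> (edge_rel A)\<^sup>*"
  by (simp add: conn_def edge_rel_def)

lemma conn_refl [simp]: "conn A u u"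
  by (simp add: conn_rel)

lemma conn_sym: "conn A u v \<Longrightarrow> conn A v u"
  using sym_rtrancl[OF sym_edge_rel[of A]] unfolding conn_rel sym_def by blast

lemma conn_trans: "conn A u v \<Longrightarrow> conn A v w \<Longrightarrow> conn A u w"
  unfolding conn_rel by (rule rtrancl_trans)

lemma conn_insert:
  "conn (insert {u, v} A) x y \<longleftrightarrow> conn A x y \<or> (conn A x u \<and> conn A v y) \<or> (conn A x v \<and> conn A u y)"
  unfolding conn_rel edge_rel_insert rtrancl_insert by (auto intro: rtrancl_trans)

definition component :: "nat list set \<Rightarrow> nat list set set \<Rightarrow> nat list \<Rightarrow> nat list set" where
  "component V A u = {v \<in> V. conn A u v}"

definition n_comps :: "nat list set \<Rightarrow> nat list set set \<Rightarrow> nat" where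
  "n_comps V A = card (component V A ` V)"

lemma ncomp_eq_n_comps: "ncomp n A = n_comps (sigma_verts n) A"
  by (simp add: ncomp_def n_comps_def component_def)

lemma component_eq_iff: "y \<in> V \<Longrightarrow> component V A x = component V A y \<longleftrightarrow> conn A x y"
  unfolding component_def conn_rel by (rule reach_class_eq_iff[OF sym_edge_rel])

lemma components_insert:
  assumes uV: "u \<in> V" and vV: "v \<in> V" and sep: "\<not> conn A u v"
  defines "C \<equiv> component V A"
  shows "component V (insert {u, v} A) ` V = insert (C u \<union> C v) (C ` V - {C u, C v})"
proof
  let ?C' = "component V (insert {u, v} A)"
  have merged: "?C' x = C u \<union> C v" if "conn A x u \<or> conn A x v" for x
    using that sep unfolding C_def component_def conn_insert by (auto intro: conn_trans conn_sym)
  have untouched: "?C' x = C x" if "\<not> conn A x u" "\<not> conn A x v" for x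
    using that unfolding C_def component_def conn_insert by auto
  have other: "C x \<notin> {C u, C v} \<longleftrightarrow> \<not> conn A x u \<and> \<not> conn A x v" for x
    using component_eq_iff[OF uV, of A x] component_eq_iff[OF vV, of A x] unfolding C_def by auto
  show "?C' ` V \<subseteq> insert (C u \<union> C v) (C ` V - {C u, C v})"
  proof
    fix S assume "S \<in> ?C' ` V"
    then obtain x where x: "x \<in> V" "S = ?C' x" by blast
    show "S \<in> insert (C u \<union> C v) (C ` V - {C u, C v})"
    proof (cases "conn A x u \<or> conn A x v")
      case True
      then show ?thesis using merged x(2) by simp
    next
      case False
      then show ?thesis using untouched[of x] other[of x] x by blast
    qed
  qed
  show "insert (C u \<union> C v) (C ` V - {C u, C v}) \<subseteq> ?C' ` V"
  proof
    fix S assume S: "S \<in> insert (C u \<union> C v) (C ` V - {C u, C v})"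
    show "S \<in> ?C' ` V"
    proof (cases "S = C u \<union> C v")
      case True
      then show ?thesis using merged[of u] uV by (metis conn_refl image_eqI)
    next
      case False
      then obtain x where "x \<in> V" "S = C x" "C x \<notin> {C u, C v}" using S by blast
      then show ?thesis using untouched other by (metis image_eqI)
    qed
  qed
qed

lemma n_comps_insert:
  assumes fin: "finite V" and uV: "u \<in> V" and vV: "v \<in> V"
  shows "n_comps V A = n_comps V (insert {u, v} A) + (if conn A u v then 0 else 1)"
proof (cases "conn A u v")
  case True
  have "conn (insert {u, v} A) x y \<longleftrightarrow> conn A x y" for x y
    unfolding conn_insert using True by (meson conn_sym conn_trans)
  then show ?thesis using True unfolding n_comps_def component_def by simp
next
  case False
  let ?C = "component V A"
  have ne: "?C u \<noteq> ?C v" using component_eq_iff[OF vV] False by blast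
  have "u \<in> ?C u \<union> ?C v" using uV unfolding component_def by simp
  moreover have "u \<notin> ?C x" if "?C x \<notin> {?C u, ?C v}" for x
    using that component_eq_iff[OF uV, of A x] unfolding component_def by (auto dest: conn_sym)
  ultimately have "?C u \<union> ?C v \<notin> ?C ` V - {?C u, ?C v}" by blast
  moreover have "card (?C ` V - {?C u, ?C v}) + 2 = card (?C ` V)"
  proof -
    have sub: "{?C u, ?C v} \<subseteq> ?C ` V" using uV vV by auto
    then have "card {?C u, ?C v} \<le> card (?C ` V)" using fin by (intro card_mono) auto
    then show ?thesis using sub ne fin by (simp add: card_Diff_subset)
  qed
  ultimately show ?thesis
    using False fin unfolding n_comps_def components_insert[OF uV vV False] by simp
qed

section \<open>The recursive structure of \<open>\<Sigma>\<^sub>n\<close>\<close>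

text \<open>The nine outmost vertices of the three copies inside \<open>\<Sigma>\<^sub>n\<^sub>+\<^sub>1\<close>: \<open>bvert n x\<close> is corner
  \<open>x mod 3\<close> (0 = top, 1 = left, 2 = right) of copy \<open>x div 3\<close>.\<close>

definition bvert :: "nat \<Rightarrow> nat \<Rightarrow> nat list" where
  "bvert n x = (x div 3) # replicate n (x mod 3)"

definition copy_edges :: "nat \<Rightarrow> nat list set set \<Rightarrow> nat list set set" where
  "copy_edges i A = (`) ((#) i) ` A"

definition bridge :: "nat \<Rightarrow> nat \<times> nat \<Rightarrow> nat list set" where
  "bridge n pq = {bvert n (fst pq), bvert n (snd pq)}"

lemma verts_0: "sigma_verts 0 = {[]}"
  unfolding sigma_verts_def by auto

lemma verts_Suc: "sigma_verts (Suc n) = (\<Union>i\<in>{0,1,2}. (#) i ` sigma_verts n)"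
proof
  show "sigma_verts (Suc n) \<subseteq> (\<Union>i\<in>{0,1,2}. (#) i ` sigma_verts n)"
  proof
    fix w assume "w \<in> sigma_verts (Suc n)"
    then obtain i w' where "w = i # w'" "length w' = n" "set w' \<subseteq> {0,1,2}" "i \<in> {0,1,2}"
      unfolding sigma_verts_def by (cases w) auto
    then show "w \<in> (\<Union>i\<in>{0,1,2}. (#) i ` sigma_verts n)" unfolding sigma_verts_def by auto
  qed
qed (auto simp: sigma_verts_def)

lemma finite_verts: "finite (sigma_verts n)"
  by (induction n) (simp_all add: verts_0 verts_Suc)

lemma card_verts_Suc: "card (sigma_verts (Suc n)) = 3 * card (sigma_verts n)"
proof -
  have "card (\<Union>i\<in>{0,1,2::nat}. (#) i ` sigma_verts n) = (\<Sum>i\<in>{0,1,2::nat}. card ((#) i ` sigma_verts n))"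
    by (rule card_UN_disjoint) (auto simp: finite_verts)
  then show ?thesis unfolding verts_Suc by (simp add: card_image)
qed

lemma bvert_in_verts: "x < 9 \<Longrightarrow> bvert n x \<in> sigma_verts (Suc n)"
  unfolding bvert_def sigma_verts_def by auto

lemma outmost_Suc: "top_v (Suc n) = bvert n 0" "left_v (Suc n) = bvert n 4" "right_v (Suc n) = bvert n 8"
  unfolding top_v_def left_v_def right_v_def bvert_def by simp_all

lemma edges_Suc:
  "sigma_edges (Suc n) = insert (bridge n (1,3)) (insert (bridge n (2,6)) (insert (bridge n (5,7))
     (copy_edges 0 (sigma_edges n) \<union> copy_edges 1 (sigma_edges n) \<union> copy_edges 2 (sigma_edges n))))"
  by (cases n) (auto simp: bridge_def bvert_def copy_edges_def top_v_def left_v_def right_v_def)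

lemma finite_edges: "finite (sigma_edges n)"
  by (induction n) (simp_all add: edges_Suc copy_edges_def)

lemma simple_edges_sigma: "simple_edges (sigma_verts n) (sigma_edges n)"
  unfolding simple_edges_def
proof (induction n)
  case (Suc n)
  have copy: "\<exists>u v. u \<noteq> v \<and> u \<in> sigma_verts (Suc n) \<and> v \<in> sigma_verts (Suc n) \<and> e = {u, v}"
    if e: "e \<in> copy_edges i (sigma_edges n)" and i: "i \<in> {0,1,2}" for e i
  proof -
    obtain e' where e': "e' \<in> sigma_edges n" "e = (#) i ` e'" using e unfolding copy_edges_def by blast
    then obtain u v where uv: "u \<noteq> v" "u \<in> sigma_verts n" "v \<in> sigma_verts n" "e' = {u, v}"
      using bspec[OF Suc.IH e'(1)] by blast
    then have "i # u \<noteq> i # v" "i # u \<in> sigma_verts (Suc n)" "i # v \<in> sigma_verts (Suc n)" "e = {i # u, i # v}"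
      using e' i unfolding verts_Suc by auto
    then show ?thesis by blast
  qed
  have bridge: "\<exists>u v. u \<noteq> v \<and> u \<in> sigma_verts (Suc n) \<and> v \<in> sigma_verts (Suc n) \<and> bridge n (p, q) = {u, v}"
    if "p < 9" "q < 9" "p div 3 \<noteq> q div 3" for p q
    using that bvert_in_verts[of p n] bvert_in_verts[of q n] unfolding bridge_def
    by (intro exI[of _ "bvert n p"] exI[of _ "bvert n q"]) (auto simp: bvert_def)
  show ?case unfolding edges_Suc
    using copy[of _ 0] copy[of _ 1] copy[of _ 2] bridge[of 1 3] bridge[of 2 6] bridge[of 5 7] by auto
qed simp

lemma edges_nonempty: "e \<in> sigma_edges n \<Longrightarrow> e \<noteq> {}"
  using simple_edges_sigma[of n] unfolding simple_edges_def by auto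

lemma inj_image_Cons: "inj_on (image ((#) (i::nat))) X"
  unfolding inj_on_def by (meson inj_image_eq_iff list.inject inj_onI)

lemma copy_edges_disjoint:
  "i \<noteq> j \<Longrightarrow> (\<And>e. e \<in> A \<Longrightarrow> e \<noteq> {}) \<Longrightarrow> copy_edges i A \<inter> copy_edges j B = {}"
  unfolding copy_edges_def by (auto simp: image_iff)

lemma bridge_notin_copy_edges: "p div 3 \<noteq> q div 3 \<Longrightarrow> bridge n (p, q) \<notin> copy_edges i A"
proof
  assume ne: "p div 3 \<noteq> q div 3" and "bridge n (p, q) \<in> copy_edges i A"
  then obtain e where "{bvert n p, bvert n q} = (#) i ` e" unfolding bridge_def copy_edges_def by auto
  then have "bvert n p \<in> (#) i ` e" "bvert n q \<in> (#) i ` e" by blast+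
  then show False using ne unfolding bvert_def by auto
qed

lemma edge_rel_copy_edges: "edge_rel (copy_edges i A) = map_rel ((#) i) (edge_rel A)"
proof
  show "edge_rel (copy_edges i A) \<subseteq> map_rel ((#) i) (edge_rel A)"
  proof
    fix p assume "p \<in> edge_rel (copy_edges i A)"
    then obtain a b e where ab: "p = (a, b)" "e \<in> A" "{a, b} = (#) i ` e"
      unfolding edge_rel_def copy_edges_def by auto
    then have "a \<in> (#) i ` e" "b \<in> (#) i ` e" by (metis insertI1, metis insertI1 insert_commute)
    then obtain x y where xy: "a = i # x" "b = i # y" "x \<in> e" "y \<in> e" by auto
    have "e = {x, y}"
    proof
      show "e \<subseteq> {x, y}"
      proof
        fix z assume "z \<in> e"
        then have "i # z \<in> {a, b}" using ab by auto
        then show "z \<in> {x, y}" using xy by auto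
      qed
    qed (use xy in auto)
    then show "p \<in> map_rel ((#) i) (edge_rel A)"
      unfolding map_rel_def edge_rel_def using ab xy by force
  qed
  show "map_rel ((#) i) (edge_rel A) \<subseteq> edge_rel (copy_edges i A)"
  proof
    fix p assume "p \<in> map_rel ((#) i) (edge_rel A)"
    then obtain x y where "p = (i # x, i # y)" "{x, y} \<in> A" unfolding map_rel_def edge_rel_def by auto
    then show "p \<in> edge_rel (copy_edges i A)"
      unfolding edge_rel_def copy_edges_def by (auto intro: image_eqI[of _ _ "{x, y}"])
  qed
qed

lemma rtrancl_copies:
  assumes "(p, q) \<in> (\<Union>i\<in>I. map_rel ((#) i) (R i))\<^sup>*"
  shows "p = i # x \<Longrightarrow> \<exists>y. q = i # y \<and> (x, y) \<in> (R i)\<^sup>*"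
  using assms
proof (induction rule: rtrancl_induct)
  case (step q r)
  then obtain y where y: "q = i # y" "(x, y) \<in> (R i)\<^sup>*" by blast
  from step(2) obtain j a b where "(a, b) \<in> R j" "q = j # a" "r = j # b"
    unfolding map_rel_def by auto
  with y show ?case by (auto intro: rtrancl_into_rtrancl)
qed simp

lemma conn_copies:
  assumes "i \<in> I"
  shows "conn (\<Union>i\<in>I. copy_edges i (AA i)) (i # x) (j # y) \<longleftrightarrow> i = j \<and> conn (AA i) x y"
proof -
  let ?R = "\<Union>i\<in>I. map_rel ((#) i) (edge_rel (AA i))"
  have R: "edge_rel (\<Union>i\<in>I. copy_edges i (AA i)) = ?R"
    unfolding edge_rel_copy_edges[symmetric] by (auto simp: edge_rel_def)
  have lift: "(i # x, i # y) \<in> ?R\<^sup>*" if "conn (AA i) x y"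
  proof -
    have "(i # x, i # y) \<in> (map_rel ((#) i) (edge_rel (AA i)))\<^sup>*"
      using that unfolding conn_rel by (rule map_rel_rtrancl)
    then show ?thesis using assms by (meson UN_upper rtrancl_mono subsetD)
  qed
  show ?thesis
  proof
    assume "conn (\<Union>i\<in>I. copy_edges i (AA i)) (i # x) (j # y)"
    then have "(i # x, j # y) \<in> ?R\<^sup>*" unfolding conn_rel R .
    from rtrancl_copies[OF this refl] show "i = j \<and> conn (AA i) x y" unfolding conn_rel by auto
  qed (use lift in \<open>auto simp: conn_rel R\<close>)
qed

lemma n_comps_copies:
  assumes fin: "finite V" "finite I"
  shows "n_comps (\<Union>i\<in>I. (#) i ` V) (\<Union>i\<in>I. copy_edges i (AA i)) = (\<Sum>i\<in>I. n_comps V (AA i))"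
proof -
  define D where "D = (\<Union>i\<in>I. copy_edges i (AA i))"
  define V' where "V' = (\<Union>i\<in>I. (#) i ` V)"
  define cls where "cls i x = {y \<in> V. conn (AA i) x y}" for i x
  have cls_D: "{y \<in> V'. conn D (i # x) y} = (#) i ` cls i x" if "i \<in> I" for i x
    unfolding V'_def D_def cls_def using conn_copies[OF that] that by auto
  have classes: "(\<lambda>u. {y \<in> V'. conn D u y}) ` V' = (\<Union>i\<in>I. image ((#) i) ` (cls i ` V))"
  proof -
    have "(\<lambda>u. {y \<in> V'. conn D u y}) ` V' = (\<Union>i\<in>I. (\<lambda>u. {y \<in> V'. conn D u y}) ` ((#) i ` V))"
      unfolding V'_def by blast
    also have "\<dots> = (\<Union>i\<in>I. image ((#) i) ` (cls i ` V))"
      by (intro SUP_cong refl) (auto simp: image_image cls_D)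
    finally show ?thesis .
  qed
  have "card (\<Union>i\<in>I. image ((#) i) ` (cls i ` V)) = (\<Sum>i\<in>I. card (image ((#) i) ` (cls i ` V)))"
  proof (rule card_UN_disjoint)
    show "\<forall>i\<in>I. \<forall>j\<in>I. i \<noteq> j \<longrightarrow> image ((#) i) ` (cls i ` V) \<inter> image ((#) j) ` (cls j ` V) = {}"
    proof (intro ballI impI)
      fix i j :: nat assume "i \<in> I" "j \<in> I" "i \<noteq> j"
      show "image ((#) i) ` (cls i ` V) \<inter> image ((#) j) ` (cls j ` V) = {}"
      proof (rule ccontr)
        assume "image ((#) i) ` (cls i ` V) \<inter> image ((#) j) ` (cls j ` V) \<noteq> {}"
        then obtain x y where xy: "x \<in> V" "(#) i ` cls i x = (#) j ` cls j y" by auto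
        have "x \<in> cls i x" using xy(1) unfolding cls_def by simp
        then have "i # x \<in> (#) j ` cls j y" using xy(2) by auto
        then show False using \<open>i \<noteq> j\<close> by auto
      qed
    qed
  qed (use fin in auto)
  also have "\<dots> = (\<Sum>i\<in>I. card (cls i ` V))"
    by (intro sum.cong refl card_image inj_image_Cons)
  finally show ?thesis unfolding n_comps_def component_def D_def[symmetric] V'_def[symmetric] classes cls_def by simp
qed

lemma card_copies:
  assumes "finite I" "\<And>i. i \<in> I \<Longrightarrow> finite (AA i)" "\<And>i e. i \<in> I \<Longrightarrow> e \<in> AA i \<Longrightarrow> e \<noteq> {}"
  shows "card (\<Union>i\<in>I. copy_edges i (AA i)) = (\<Sum>i\<in>I. card (AA i))"
proof -
  have "card (\<Union>i\<in>I. copy_edges i (AA i)) = (\<Sum>i\<in>I. card (copy_edges i (AA i)))"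
  proof (rule card_UN_disjoint)
    show "\<forall>i\<in>I. finite (copy_edges i (AA i))" using assms(2) unfolding copy_edges_def by auto
    show "\<forall>i\<in>I. \<forall>j\<in>I. i \<noteq> j \<longrightarrow> copy_edges i (AA i) \<inter> copy_edges j (AA j) = {}"
      using copy_edges_disjoint assms(3) by metis
  qed (rule assms(1))
  also have "\<dots> = (\<Sum>i\<in>I. card (AA i))"
    unfolding copy_edges_def by (intro sum.cong refl card_image inj_image_Cons)
  finally show ?thesis .
qed

section \<open>Boundary types\<close>

text \<open>The boundary type of a spanning subgraph records which of the outmost vertices
  top, left, right are connected. By transitivity only five patterns occur: 0 = all three,
  1 = only left--right, 2 = only top--left, 3 = only top--right, 4 = none.\<close>

definition btype_code :: "bool \<Rightarrow> bool \<Rightarrow> bool \<Rightarrow> nat" where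
  "btype_code a b c = (if a \<and> b then 0 else if b then 1 else if a then 2 else if c then 3 else 4)"

definition btype :: "nat \<Rightarrow> nat list set set \<Rightarrow> nat" where
  "btype n A = btype_code (conn A (top_v n) (left_v n)) (conn A (left_v n) (right_v n)) (conn A (top_v n) (right_v n))"

text \<open>A label in \<open>{0,1,2}\<close> for the component of corner \<open>s\<close> (0 = top, 1 = left, 2 = right) in
  boundary type \<open>k\<close>: two corners are connected iff their labels agree.\<close>

definition corner_class :: "nat \<Rightarrow> nat \<Rightarrow> nat" where
  "corner_class k s = (if k = 0 then 0 else if k = 1 then (if s = 0 then 0 else 1)
     else if k = 2 then (if s \<le> 1 then 0 else 2) else if k = 3 then (if s = 1 then 1 else 0) else s)"

lemma btype_lt: "btype n A < 5"
  unfolding btype_def btype_code_def by auto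

lemma corner_class_lt: "s < 3 \<Longrightarrow> corner_class k s < 3"
  unfolding corner_class_def by auto

lemma corner_class_btype_code:
  assumes "\<not> (a \<and> b \<and> \<not> c)" "\<not> (a \<and> c \<and> \<not> b)" "\<not> (c \<and> b \<and> \<not> a)"
  shows "corner_class (btype_code a b c) 0 = corner_class (btype_code a b c) 1 \<longleftrightarrow> a"
    and "corner_class (btype_code a b c) 1 = corner_class (btype_code a b c) 2 \<longleftrightarrow> b"
    and "corner_class (btype_code a b c) 0 = corner_class (btype_code a b c) 2 \<longleftrightarrow> c"
  using assms by (cases a; cases b; cases c; simp add: btype_code_def corner_class_def)+

lemma conn_corners_iff:
  assumes "s < 3" "t < 3"
  shows "conn A (replicate n s) (replicate n t) \<longleftrightarrow> corner_class (btype n A) s = corner_class (btype n A) t"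
proof -
  define r0 r1 r2 where "r0 = replicate n (0::nat)" and "r1 = replicate n (1::nat)" and "r2 = replicate n (2::nat)"
  have sym: "conn A r1 r0 \<longleftrightarrow> conn A r0 r1" "conn A r2 r1 \<longleftrightarrow> conn A r1 r2" "conn A r2 r0 \<longleftrightarrow> conn A r0 r2"
    by (meson conn_sym)+
  have trans: "\<not> (conn A r0 r1 \<and> conn A r1 r2 \<and> \<not> conn A r0 r2)"
    "\<not> (conn A r0 r1 \<and> conn A r0 r2 \<and> \<not> conn A r1 r2)"
    "\<not> (conn A r0 r2 \<and> conn A r1 r2 \<and> \<not> conn A r0 r1)"
    by (meson conn_sym conn_trans)+
  define k where "k = btype n A"
  have "k = btype_code (conn A r0 r1) (conn A r1 r2) (conn A r0 r2)"
    unfolding k_def btype_def r0_def r1_def r2_def top_v_def left_v_def right_v_def ..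
  then have labels: "corner_class k 0 = corner_class k 1 \<longleftrightarrow> conn A r0 r1"
    "corner_class k 1 = corner_class k 2 \<longleftrightarrow> conn A r1 r2" "corner_class k 0 = corner_class k 2 \<longleftrightarrow> conn A r0 r2"
    using corner_class_btype_code[OF trans] by simp_all
  have "s = 0 \<or> s = 1 \<or> s = 2" "t = 0 \<or> t = 1 \<or> t = 2" using assms by auto
  then show ?thesis unfolding k_def[symmetric]
    by (elim disjE) (simp_all only: r0_def[symmetric] r1_def[symmetric] r2_def[symmetric] labels sym conn_refl
        eq_commute[of "corner_class k 1" "corner_class k 0"] eq_commute[of "corner_class k 2" "corner_class k 1"]
        eq_commute[of "corner_class k 2" "corner_class k 0"] simp_thms)
qed

section \<open>Tracking the components of the nine boundary vertices\<close>

definition classes_repr :: "nat \<Rightarrow> nat list set set \<Rightarrow> nat list \<Rightarrow> bool" where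
  "classes_repr n D cl \<longleftrightarrow> length cl = 9 \<and> (\<forall>x<9. \<forall>y<9. conn D (bvert n x) (bvert n y) \<longleftrightarrow> cl ! x = cl ! y)"

definition copies :: "nat list set set \<Rightarrow> nat list set set \<Rightarrow> nat list set set \<Rightarrow> nat list set set" where
  "copies A0 A1 A2 = (\<Union>i\<in>{0,1,2}. copy_edges i ([A0, A1, A2] ! i))"

definition init_classes :: "nat \<Rightarrow> nat \<Rightarrow> nat \<Rightarrow> nat list" where
  "init_classes k0 k1 k2 = [corner_class k0 0, corner_class k0 1, corner_class k0 2,
     3 + corner_class k1 0, 3 + corner_class k1 1, 3 + corner_class k1 2,
     6 + corner_class k2 0, 6 + corner_class k2 1, 6 + corner_class k2 2]"

lemma init_classes_nth:
  "x < 9 \<Longrightarrow> init_classes k0 k1 k2 ! x = 3 * (x div 3) + corner_class ([k0, k1, k2] ! (x div 3)) (x mod 3)"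
proof -
  assume "x < 9"
  then have "x = 0 \<or> x = 1 \<or> x = 2 \<or> x = 3 \<or> x = 4 \<or> x = 5 \<or> x = 6 \<or> x = 7 \<or> x = 8" by auto
  then show ?thesis by (auto simp: init_classes_def)
qed

lemma div3_eq_iff: "a < 3 \<Longrightarrow> b < 3 \<Longrightarrow> 3 * x + a = 3 * y + (b::nat) \<longleftrightarrow> x = y \<and> a = b"
  by presburger

lemma classes_repr_copies:
  "classes_repr n (copies A0 A1 A2) (init_classes (btype n A0) (btype n A1) (btype n A2))"
  unfolding classes_repr_def
proof (intro conjI allI impI)
  show "length (init_classes (btype n A0) (btype n A1) (btype n A2)) = 9" by (simp add: init_classes_def)
  fix x y :: nat assume xy: "x < 9" "y < 9"
  define k where "k i = btype n ([A0, A1, A2] ! i)" for i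
  have I: "x div 3 \<in> {0,1,2}" "y div 3 \<in> {0,1,2}" using xy by auto
  have m: "x mod 3 < 3" "y mod 3 < 3" by auto
  have types: "[btype n A0, btype n A1, btype n A2] ! i = k i" if "i \<in> {0,1,2}" for i
    using that unfolding k_def by auto
  have "conn (copies A0 A1 A2) (bvert n x) (bvert n y) \<longleftrightarrow>
      x div 3 = y div 3 \<and> conn ([A0, A1, A2] ! (x div 3)) (replicate n (x mod 3)) (replicate n (y mod 3))"
    unfolding bvert_def copies_def by (rule conn_copies[OF I(1)])
  also have "\<dots> \<longleftrightarrow> x div 3 = y div 3 \<and> corner_class (k (x div 3)) (x mod 3) = corner_class (k (y div 3)) (y mod 3)"
    using conn_corners_iff[OF m] unfolding k_def by auto
  also have "\<dots> \<longleftrightarrow> 3 * (x div 3) + corner_class (k (x div 3)) (x mod 3) = 3 * (y div 3) + corner_class (k (y div 3)) (y mod 3)"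
    by (rule div3_eq_iff[symmetric, OF corner_class_lt[OF m(1)] corner_class_lt[OF m(2)]])
  finally show "conn (copies A0 A1 A2) (bvert n x) (bvert n y) \<longleftrightarrow>
      init_classes (btype n A0) (btype n A1) (btype n A2) ! x = init_classes (btype n A0) (btype n A1) (btype n A2) ! y"
    unfolding init_classes_nth[OF xy(1)] init_classes_nth[OF xy(2)] types[OF I(1)] types[OF I(2)] .
qed

text \<open>Adding bridges one by one: \<open>union_find\<close> merges the labels of the two ends and counts the
  merges, i.e. the bridges that join two different components.\<close>

definition relabel :: "nat list \<Rightarrow> nat \<Rightarrow> nat \<Rightarrow> nat list" where
  "relabel cl a b = map (\<lambda>c. if c = b then a else c) cl"

fun union_find :: "nat list \<Rightarrow> (nat \<times> nat) list \<Rightarrow> nat list \<times> nat" where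
  "union_find cl [] = (cl, 0)"
| "union_find cl ((p, q) # es) = (let r = union_find (relabel cl (cl ! p) (cl ! q)) es in
      (fst r, snd r + (if cl ! p = cl ! q then 0 else 1)))"

fun add_bridges :: "nat \<Rightarrow> nat list set set \<Rightarrow> (nat \<times> nat) list \<Rightarrow> nat list set set" where
  "add_bridges n D [] = D"
| "add_bridges n D (pq # es) = add_bridges n (insert (bridge n pq) D) es"

lemma classes_repr_insert_bridge:
  assumes "classes_repr n D cl" "p < 9" "q < 9"
  shows "classes_repr n (insert (bridge n (p, q)) D) (relabel cl (cl ! p) (cl ! q))"
  unfolding classes_repr_def
proof (intro conjI allI impI)
  have len: "length cl = 9" using assms(1) unfolding classes_repr_def by blast
  have c: "conn D (bvert n a) (bvert n b) \<longleftrightarrow> cl ! a = cl ! b" if "a < 9" "b < 9" for a b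
    using assms(1) that unfolding classes_repr_def by blast
  show "length (relabel cl (cl ! p) (cl ! q)) = 9" using len unfolding relabel_def by simp
  fix x y :: nat assume xy: "x < 9" "y < 9"
  have "conn (insert (bridge n (p, q)) D) (bvert n x) (bvert n y) \<longleftrightarrow> conn D (bvert n x) (bvert n y) \<or>
      (conn D (bvert n x) (bvert n p) \<and> conn D (bvert n q) (bvert n y)) \<or>
      (conn D (bvert n x) (bvert n q) \<and> conn D (bvert n p) (bvert n y))"
    unfolding bridge_def by (simp add: conn_insert)
  also have "\<dots> \<longleftrightarrow> cl ! x = cl ! y \<or> (cl ! x = cl ! p \<and> cl ! q = cl ! y) \<or> (cl ! x = cl ! q \<and> cl ! p = cl ! y)"
    using c xy assms(2,3) by simp
  also have "\<dots> \<longleftrightarrow> relabel cl (cl ! p) (cl ! q) ! x = relabel cl (cl ! p) (cl ! q) ! y"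
    unfolding relabel_def using xy len by auto
  finally show "conn (insert (bridge n (p, q)) D) (bvert n x) (bvert n y) \<longleftrightarrow>
      relabel cl (cl ! p) (cl ! q) ! x = relabel cl (cl ! p) (cl ! q) ! y" .
qed

lemma union_find_correct:
  assumes "classes_repr n D cl" "\<forall>(p, q)\<in>set es. p < 9 \<and> q < 9"
  shows "classes_repr n (add_bridges n D es) (fst (union_find cl es)) \<and>
    n_comps (sigma_verts (Suc n)) D = n_comps (sigma_verts (Suc n)) (add_bridges n D es) + snd (union_find cl es)"
  using assms
proof (induction es arbitrary: D cl)
  case (Cons pq es)
  obtain p q where pq: "pq = (p, q)" by force
  have pq9: "p < 9" "q < 9" using Cons.prems(2) pq by auto
  define D' where "D' = insert (bridge n (p, q)) D"
  define cl' where "cl' = relabel cl (cl ! p) (cl ! q)"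
  have inv: "classes_repr n D' cl'"
    unfolding D'_def cl'_def by (rule classes_repr_insert_bridge[OF Cons.prems(1) pq9])
  have "conn D (bvert n p) (bvert n q) \<longleftrightarrow> cl ! p = cl ! q"
    using Cons.prems(1) pq9 unfolding classes_repr_def by blast
  then have step: "n_comps (sigma_verts (Suc n)) D = n_comps (sigma_verts (Suc n)) D' + (if cl ! p = cl ! q then 0 else 1)"
    unfolding D'_def bridge_def
    using n_comps_insert[OF finite_verts bvert_in_verts[OF pq9(1)] bvert_in_verts[OF pq9(2)], where A = D] by simp
  have "\<forall>(p, q)\<in>set es. p < 9 \<and> q < 9" using Cons.prems(2) by auto
  then show ?case
    using Cons.IH[OF inv] step unfolding pq D'_def cl'_def by (simp add: Let_def)
qed simp

lemma card_add_bridges: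
  assumes "finite D" "distinct (map (bridge n) es)" "\<forall>e\<in>set es. bridge n e \<notin> D"
  shows "card (add_bridges n D es) = card D + length es"
  using assms
proof (induction es arbitrary: D)
  case (Cons e es)
  then have "card (add_bridges n (insert (bridge n e) D) es) = card (insert (bridge n e) D) + length es"
    by (intro Cons.IH) auto
  then show ?case using Cons.prems by simp
qed simp

section \<open>The transfer polynomials\<close>

text \<open>Boundary type of \<open>\<Sigma>\<^sub>n\<^sub>+\<^sub>1\<close> read off from labels of the nine vertices (its outmost vertices
  are 0, 4, 8).\<close>

definition outer_btype :: "nat list \<Rightarrow> nat" where
  "outer_btype cl = btype_code (cl ! 0 = cl ! 4) (cl ! 4 = cl ! 8) (cl ! 0 = cl ! 8)"

definition bridge_sets :: "(nat \<times> nat) list list" where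
  "bridge_sets = [[], [(1,3)], [(2,6)], [(2,6),(1,3)], [(5,7)], [(5,7),(1,3)], [(5,7),(2,6)], [(5,7),(2,6),(1,3)]]"

text \<open>\<open>transfer_coeff k k0 k1 k2\<close> sums, over the bridge subsets that turn copies of boundary
  types \<open>k0, k1, k2\<close> into a subgraph of type \<open>k\<close>, the sign change caused by the added bridges
  and the merged components. \<open>transfer\<close> is the resulting cubic form.\<close>

definition transfer_coeff :: "nat \<Rightarrow> nat \<Rightarrow> nat \<Rightarrow> nat \<Rightarrow> int" where
  "transfer_coeff k k0 k1 k2 = sum_list (map (\<lambda>es. let r = union_find (init_classes k0 k1 k2) es in
      if outer_btype (fst r) = k then (-1) ^ (length es + snd r) else 0) bridge_sets)"

definition transfer :: "nat \<Rightarrow> (nat \<Rightarrow> int) \<Rightarrow> int" where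
  "transfer k w = (\<Sum>k0<5. \<Sum>k1<5. \<Sum>k2<5. transfer_coeff k k0 k1 k2 * w k0 * w k1 * w k2)"

lemma sum_lessThan_5: "(\<Sum>k<(5::nat). f k) = f 0 + f 1 + f 2 + f 3 + (f 4 :: int)"
  by (simp add: numeral_eq_Suc lessThan_Suc add.commute add.left_commute)

lemma transfer_eval:
  assumes "w 1 = N" "w 2 = N" "w 3 = N"
  shows "transfer 0 w = 2 * w 0^3 + 12 * w 0^2 * N + 6 * w 0 * N^2"
    and "transfer 1 w = w 0^3 + 11 * w 0^2 * N + 4 * w 0^2 * w 4 + 28 * w 0 * N^2
            + 8 * w 0 * N * w 4 + 14 * N^3 + 4 * N^2 * w 4"
    and "transfer 2 w = transfer 1 w" and "transfer 3 w = transfer 1 w"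
    and "transfer 4 w = w 0^3 + 21 * w 0^2 * N + 12 * w 0^2 * w 4 + 120 * w 0 * N^2
            + 120 * w 0 * N * w 4 + 24 * w 0 * w 4^2 + 172 * N^3 + 204 * N^2 * w 4
            + 72 * N * w 4^2 + 8 * w 4^3"
  using assms unfolding transfer_def sum_lessThan_5
  by (simp_all add: transfer_coeff_def bridge_sets_def init_classes_def corner_class_def relabel_def
      outer_btype_def btype_code_def)
    (simp_all add: algebra_simps power2_eq_square power3_eq_cube)

section \<open>Signed subgraph sums of \<open>\<Sigma>\<^sub>n\<close> by boundary type\<close>

text \<open>The sign of a subgraph (its weight at \<open>(2,0)\<close>) and the signed sums by boundary type.\<close>

definition sub_sign :: "nat \<Rightarrow> nat list set set \<Rightarrow> int" where
  "sub_sign n A = (-1) ^ (card A + card (sigma_verts n) + ncomp n A)"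

definition type_sum :: "nat \<Rightarrow> nat \<Rightarrow> int" where
  "type_sum n k = (\<Sum>A\<in>Pow (sigma_edges n). if btype n A = k then sub_sign n A else 0)"

lemma bridge_sets_valid:
  assumes "es \<in> set bridge_sets"
  shows "\<forall>(p, q)\<in>set es. p < 9 \<and> q < 9"
    and "distinct (map (bridge n) es)"
    and "\<forall>e\<in>set es. bridge n e \<notin> copies A0 A1 A2"
proof -
  show "\<forall>(p, q)\<in>set es. p < 9 \<and> q < 9" using assms unfolding bridge_sets_def by auto
  show "distinct (map (bridge n) es)"
    using assms unfolding bridge_sets_def bridge_def bvert_def by (auto simp: doubleton_eq_iff)
  have "\<forall>(p, q)\<in>set es. p div 3 \<noteq> q div 3" using assms unfolding bridge_sets_def by auto
  then show "\<forall>e\<in>set es. bridge n e \<notin> copies A0 A1 A2"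
    unfolding copies_def using bridge_notin_copy_edges by fast
qed

lemma btype_add_bridges:
  assumes "es \<in> set bridge_sets"
  shows "btype (Suc n) (add_bridges n (copies A0 A1 A2) es) =
    outer_btype (fst (union_find (init_classes (btype n A0) (btype n A1) (btype n A2)) es))"
  using union_find_correct[OF classes_repr_copies bridge_sets_valid(1)[OF assms]]
  unfolding btype_def outer_btype_def outmost_Suc classes_repr_def by simp

lemma sub_sign_add_bridges:
  assumes A: "A0 \<subseteq> sigma_edges n" "A1 \<subseteq> sigma_edges n" "A2 \<subseteq> sigma_edges n"
    and es: "es \<in> set bridge_sets"
  defines "r \<equiv> union_find (init_classes (btype n A0) (btype n A1) (btype n A2)) es"
  shows "sub_sign (Suc n) (add_bridges n (copies A0 A1 A2) es) =
    (-1) ^ (length es + snd r) * sub_sign n A0 * sub_sign n A1 * sub_sign n A2"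
proof -
  define D where "D = copies A0 A1 A2"
  define V where "V = sigma_verts n"
  define N' where "N' = n_comps (sigma_verts (Suc n)) (add_bridges n D es)"
  have fin: "finite A0" "finite A1" "finite A2" using A finite_edges by (auto intro: finite_subset)
  have "card D = card A0 + card A1 + card A2"
    unfolding D_def copies_def using A fin edges_nonempty[of "{}" n] by (subst card_copies) auto
  moreover have "finite D" unfolding D_def copies_def copy_edges_def using fin by auto
  ultimately have card_D': "card (add_bridges n D es) = card A0 + card A1 + card A2 + length es"
    using card_add_bridges bridge_sets_valid(2,3)[OF es] unfolding D_def by simp
  have "n_comps (sigma_verts (Suc n)) D = n_comps V A0 + n_comps V A1 + n_comps V A2"
    unfolding D_def copies_def verts_Suc V_def by (subst n_comps_copies) (auto simp: finite_verts)
  then have comps: "n_comps V A0 + n_comps V A1 + n_comps V A2 = N' + snd r"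
    using union_find_correct[OF classes_repr_copies bridge_sets_valid(1)[OF es]]
    unfolding N'_def r_def D_def by simp
  have "(length es + snd r) + (card A0 + card V + n_comps V A0) + (card A1 + card V + n_comps V A1)
      + (card A2 + card V + n_comps V A2)
    = (card (add_bridges n D es) + card (sigma_verts (Suc n)) + N') + 2 * snd r"
    using comps card_D' unfolding V_def card_verts_Suc by simp
  then have "(-1::int) ^ (card (add_bridges n D es) + card (sigma_verts (Suc n)) + N') =
      (-1) ^ (length es + snd r) * (-1) ^ (card A0 + card V + n_comps V A0)
      * (-1) ^ (card A1 + card V + n_comps V A1) * (-1) ^ (card A2 + card V + n_comps V A2)"
    by (simp only: power_add[symmetric]) (simp add: power_add power_mult)
  then show ?thesis unfolding sub_sign_def ncomp_eq_n_comps D_def N'_def V_def .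
qed

lemma sum_Pow_Un:
  assumes "finite X" "finite Y" "X \<inter> Y = {}"
  shows "(\<Sum>D\<in>Pow (X \<union> Y). g D) = (\<Sum>B\<in>Pow X. \<Sum>C\<in>Pow Y. g (B \<union> C))"
  using assms(2,3,1)
proof (induction Y arbitrary: g rule: finite_induct)
  case (insert y Y g)
  have "y \<notin> X \<union> Y" "finite (X \<union> Y)" "X \<inter> Y = {}" using insert by auto
  then have "(\<Sum>D\<in>Pow (X \<union> insert y Y). g D) = (\<Sum>D\<in>Pow (X \<union> Y). g D) + (\<Sum>D\<in>Pow (X \<union> Y). g (insert y D))"
    using sum_Pow_insert[of "X \<union> Y" y g] by simp
  also have "\<dots> = (\<Sum>B\<in>Pow X. \<Sum>C\<in>Pow Y. g (B \<union> C)) + (\<Sum>B\<in>Pow X. \<Sum>C\<in>Pow Y. g (insert y (B \<union> C)))"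
    using insert.IH[of g] insert.IH[of "\<lambda>D. g (insert y D)"] insert.prems by simp
  also have "\<dots> = (\<Sum>B\<in>Pow X. \<Sum>C\<in>Pow (insert y Y). g (B \<union> C))"
    by (simp add: sum_Pow_insert[OF insert.hyps(1,2)] sum.distrib)
  finally show ?case .
qed simp

lemma sum_Pow_copy_edges: "(\<Sum>B\<in>Pow (copy_edges i E). g B) = (\<Sum>A\<in>Pow E. g (copy_edges i A))"
proof -
  have as_image: "copy_edges i = image (image ((#) i))" by (rule ext) (simp add: copy_edges_def)
  have "copy_edges i ` Pow E = Pow (copy_edges i E)"
    unfolding as_image by (rule image_Pow_surj) simp
  moreover have "inj_on (copy_edges i) (Pow E)"
    unfolding as_image by (rule inj_on_image_Pow[OF inj_image_Cons])
  ultimately show ?thesis using sum.reindex[of "copy_edges i" "Pow E" g] by (simp add: comp_def)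
qed

lemma sum_Pow_edges_Suc:
  fixes F :: "nat list set set \<Rightarrow> int" and n :: nat
  defines "E \<equiv> sigma_edges n"
  shows "(\<Sum>A\<in>Pow (sigma_edges (Suc n)). F A) = (\<Sum>A0\<in>Pow E. \<Sum>A1\<in>Pow E. \<Sum>A2\<in>Pow E.
      sum_list (map (\<lambda>es. F (add_bridges n (copies A0 A1 A2) es)) bridge_sets))"
proof -
  define Dall where "Dall = copy_edges 0 E \<union> copy_edges 1 E \<union> copy_edges 2 E"
  define c1 c2 c3 where "c1 = bridge n (1,3)" and "c2 = bridge n (2,6)" and "c3 = bridge n (5,7)"
  have finE: "finite E" unfolding E_def by (rule finite_edges)
  have fin_copy: "finite (copy_edges i E)" for i unfolding copy_edges_def using finE by auto
  have neE: "\<And>e. e \<in> E \<Longrightarrow> e \<noteq> {}" unfolding E_def by (rule edges_nonempty)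
  have "c3 \<notin> Dall" "c2 \<notin> Dall" "c1 \<notin> Dall"
    unfolding Dall_def c1_def c2_def c3_def using bridge_notin_copy_edges by auto
  moreover have "c1 \<noteq> c2" "c1 \<noteq> c3" "c2 \<noteq> c3"
    unfolding c1_def c2_def c3_def bridge_def bvert_def by (auto simp: doubleton_eq_iff)
  moreover have "finite Dall" unfolding Dall_def using fin_copy by simp
  ultimately have "(\<Sum>A\<in>Pow (insert c1 (insert c2 (insert c3 Dall))). F A) =
      (\<Sum>D\<in>Pow Dall. sum_list (map (\<lambda>es. F (add_bridges n D es)) bridge_sets))"
    by (simp add: sum_Pow_insert sum.distrib[symmetric] bridge_sets_def c1_def c2_def c3_def ac_simps)
  also have "\<dots> = (\<Sum>A0\<in>Pow E. \<Sum>A1\<in>Pow E. \<Sum>A2\<in>Pow E.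
      sum_list (map (\<lambda>es. F (add_bridges n (copies A0 A1 A2) es)) bridge_sets))"
  proof -
    have d1: "copy_edges 0 E \<inter> copy_edges 1 E = {}" by (rule copy_edges_disjoint) (use neE in auto)
    have d2: "(copy_edges 0 E \<union> copy_edges 1 E) \<inter> copy_edges 2 E = {}"
      using copy_edges_disjoint[of 0 2 E E] copy_edges_disjoint[of 1 2 E E] neE by auto
    have "copies A0 A1 A2 = copy_edges 0 A0 \<union> copy_edges 1 A1 \<union> copy_edges 2 A2" for A0 A1 A2
      unfolding copies_def by auto
    then show ?thesis unfolding Dall_def
      using fin_copy by (simp only: sum_Pow_Un[OF _ fin_copy d2] sum_Pow_Un[OF fin_copy fin_copy d1]
          sum_Pow_copy_edges finite_Un)
  qed
  finally show ?thesis unfolding edges_Suc E_def Dall_def c1_def c2_def c3_def .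
qed

lemma sum_by_type:
  assumes "finite X" "\<And>A. A \<in> X \<Longrightarrow> b A < (5::nat)"
  shows "(\<Sum>A\<in>X. f (b A) * s A) = (\<Sum>j<5. f j * (\<Sum>A\<in>X. if b A = j then s A else (0::int)))"
proof -
  have "(\<Sum>j<5. f j * (\<Sum>A\<in>X. if b A = j then s A else 0)) = (\<Sum>A\<in>X. \<Sum>j<5. if b A = j then f j * s A else 0)"
    unfolding sum_distrib_left by (subst sum.swap) (intro sum.cong refl, simp)
  also have "\<dots> = (\<Sum>A\<in>X. f (b A) * s A)"
    using assms(2) by (intro sum.cong refl) (simp add: sum.delta)
  finally show ?thesis by simp
qed

lemma sum_triple_by_type:
  fixes s :: "'a \<Rightarrow> int"
  assumes "finite X" "\<And>A. A \<in> X \<Longrightarrow> b A < (5::nat)"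
  defines "w j \<equiv> \<Sum>A\<in>X. if b A = j then s A else (0::int)"
  shows "(\<Sum>A0\<in>X. \<Sum>A1\<in>X. \<Sum>A2\<in>X. c (b A0) (b A1) (b A2) * (s A0 * s A1 * s A2)) =
    (\<Sum>k0<5. \<Sum>k1<5. \<Sum>k2<5. c k0 k1 k2 * w k0 * w k1 * w k2)"
proof -
  have collapse: "(\<Sum>A\<in>X. f (b A) * s A) = (\<Sum>j<5. f j * w j)" for f
    unfolding w_def by (rule sum_by_type[OF assms(1,2)])
  have inner: "(\<Sum>A2\<in>X. c x y (b A2) * s A2) = (\<Sum>k2<5. c x y k2 * w k2)" for x y
    by (rule collapse)
  have middle: "(\<Sum>A1\<in>X. (\<Sum>k2<5. c x (b A1) k2 * w k2) * s A1) = (\<Sum>k1<5. (\<Sum>k2<5. c x k1 k2 * w k2) * w k1)" for x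
    by (rule collapse)
  have outer: "(\<Sum>A0\<in>X. (\<Sum>k1<5. (\<Sum>k2<5. c (b A0) k1 k2 * w k2) * w k1) * s A0) =
      (\<Sum>k0<5. (\<Sum>k1<5. (\<Sum>k2<5. c k0 k1 k2 * w k2) * w k1) * w k0)"
    by (rule collapse)
  have "(\<Sum>A0\<in>X. \<Sum>A1\<in>X. \<Sum>A2\<in>X. c (b A0) (b A1) (b A2) * (s A0 * s A1 * s A2)) =
      (\<Sum>A0\<in>X. (\<Sum>A1\<in>X. (\<Sum>A2\<in>X. c (b A0) (b A1) (b A2) * s A2) * s A1) * s A0)"
    by (simp add: sum_distrib_left sum_distrib_right mult_ac)
  also have "\<dots> = (\<Sum>k0<5. (\<Sum>k1<5. (\<Sum>k2<5. c k0 k1 k2 * w k2) * w k1) * w k0)"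
    unfolding inner middle outer ..
  also have "\<dots> = (\<Sum>k0<5. \<Sum>k1<5. \<Sum>k2<5. c k0 k1 k2 * w k0 * w k1 * w k2)"
    by (simp add: sum_distrib_left sum_distrib_right mult_ac)
  finally show ?thesis .
qed

theorem type_sum_Suc: "type_sum (Suc n) k = transfer k (type_sum n)"
proof -
  let ?coeff = "\<lambda>es k0 k1 k2. let r = union_find (init_classes k0 k1 k2) es in
      if outer_btype (fst r) = k then (-1::int) ^ (length es + snd r) else 0"
  have part: "(if btype (Suc n) (add_bridges n (copies A0 A1 A2) es) = k
        then sub_sign (Suc n) (add_bridges n (copies A0 A1 A2) es) else 0)
      = ?coeff es (btype n A0) (btype n A1) (btype n A2) * (sub_sign n A0 * sub_sign n A1 * sub_sign n A2)"
    if "A0 \<in> Pow (sigma_edges n)" "A1 \<in> Pow (sigma_edges n)" "A2 \<in> Pow (sigma_edges n)" "es \<in> set bridge_sets"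
    for A0 A1 A2 es
    using btype_add_bridges[OF that(4)] sub_sign_add_bridges[of A0 n A1 A2 es] that
    by (simp add: Let_def mult.assoc)
  have "type_sum (Suc n) k = (\<Sum>A0\<in>Pow (sigma_edges n). \<Sum>A1\<in>Pow (sigma_edges n). \<Sum>A2\<in>Pow (sigma_edges n).
      transfer_coeff k (btype n A0) (btype n A1) (btype n A2) * (sub_sign n A0 * sub_sign n A1 * sub_sign n A2))"
    unfolding type_sum_def sum_Pow_edges_Suc transfer_coeff_def
    by (intro sum.cong refl) (simp add: part sum_list_mult_const[symmetric] cong: map_cong)
  also have "\<dots> = transfer k (type_sum n)"
    unfolding transfer_def type_sum_def
    by (rule sum_triple_by_type) (simp_all add: finite_edges btype_lt)
  finally show ?thesis .
qed

lemma type_sum_0: "type_sum 0 k = (if k = 0 then 1 else 0)"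
proof -
  have "btype 0 {} = 0" unfolding btype_def btype_code_def top_v_def left_v_def right_v_def by simp
  moreover have "ncomp 0 {} = 1" unfolding ncomp_def verts_0 by simp
  then have "sub_sign 0 {} = 1" unfolding sub_sign_def verts_0 by simp
  ultimately show ?thesis unfolding type_sum_def by simp
qed

text \<open>The three types with exactly two outmost vertices connected carry the same sum, since
  the transfer forms of these types agree on weights with this symmetry.\<close>

lemma type_sum_mixed: "type_sum n 2 = type_sum n 1 \<and> type_sum n 3 = type_sum n 1"
proof (induction n)
  case (Suc n)
  then show ?case unfolding type_sum_Suc using transfer_eval(3,4)[of "type_sum n" "type_sum n 1"] by simp
qed (simp add: type_sum_0)

lemma type_sums_Suc:
  fixes n :: nat
  defines "H2 \<equiv> type_sum n 0" and "N \<equiv> type_sum n 1" and "M \<equiv> type_sum n 4"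
  shows "type_sum (Suc n) 0 = 2 * H2^3 + 12 * H2^2 * N + 6 * H2 * N^2"
    and "type_sum (Suc n) 1 = H2^3 + 11 * H2^2 * N + 4 * H2^2 * M + 28 * H2 * N^2
            + 8 * H2 * N * M + 14 * N^3 + 4 * N^2 * M"
    and "type_sum (Suc n) 4 = H2^3 + 21 * H2^2 * N + 12 * H2^2 * M + 120 * H2 * N^2
            + 120 * H2 * N * M + 24 * H2 * M^2 + 172 * N^3 + 204 * N^2 * M
            + 72 * N * M^2 + 8 * M^3"
  using transfer_eval(1,2,5)[of "type_sum n" N] type_sum_mixed[of n]
  unfolding type_sum_Suc H2_def N_def M_def by auto

section \<open>Back to acyclic orientations and the Tutte polynomial\<close>

lemma weight_2_0: "weight n A 2 0 = of_int (sub_sign n A)"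
proof -
  have "even (int a - (int b - int c)) \<longleftrightarrow> even (a + b + c)" for a b c :: nat
    by (simp add: even_diff) presburger
  then have "(-1::real) powi (int a - (int b - int c)) = (-1) ^ (a + b + c)" for a b c :: nat
    by (simp add: power_int_minus_left minus_one_power_iff)
  then show ?thesis unfolding weight_def sub_sign_def nul_def rk_def by simp
qed

lemma card_acyclic_orientations: "int (card (acyclic_orientations n)) = (\<Sum>A\<in>Pow (sigma_edges n). sub_sign n A)"
proof -
  have "acyclic_orientations n = acyclic_orients (sigma_edges n) id"
    unfolding acyclic_orientations_def acyclic_orients_def orientations_def edge_rel_def map_rel_id by auto
  moreover have "quot_comps id (sigma_verts n) A = ncomp n A" for A
    unfolding quot_comps_def ncomp_def map_rel_id conn_rel by simp
  ultimately show ?thesis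
    using card_acyclic_orients_sign_sum[OF finite_verts finite_edges simple_edges_sigma, of n id]
    unfolding sign_sum_def sub_sign_def by simp
qed

lemma sum_weights_2_0:
  "(\<Sum>A\<in>{A \<in> Pow (sigma_edges n). P A}. weight n A 2 0) =
    of_int (\<Sum>A\<in>Pow (sigma_edges n). if P A then sub_sign n A else 0)"
proof -
  have "(\<Sum>A\<in>{A \<in> Pow (sigma_edges n). P A}. weight n A 2 0) =
      (\<Sum>A\<in>Pow (sigma_edges n). if P A then weight n A 2 0 else 0)"
    by (rule sum.inter_filter) (simp add: finite_edges)
  also have "\<dots> = (\<Sum>A\<in>Pow (sigma_edges n). of_int (if P A then sub_sign n A else 0))"
    by (intro sum.cong refl) (simp add: weight_2_0)
  finally show ?thesis by (simp only: of_int_sum)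
qed

lemma H2poly_2_0: "H2poly n 2 0 = of_int (type_sum n 0)"
  unfolding H2poly_def sum_weights_2_0 type_sum_def btype_def btype_code_def
  by (intro arg_cong[where f = of_int] sum.cong refl) auto

lemma Npoly_2_0: "Npoly n 2 0 = of_int (type_sum n 1)"
  unfolding Npoly_def H1poly_def sum_weights_2_0 type_sum_def btype_def btype_code_def
  by (simp, intro sum.cong refl) auto

lemma Mpoly_2_0: "Mpoly n 2 0 = of_int (type_sum n 4)"
  unfolding Mpoly_def H0poly_def sum_weights_2_0 type_sum_def btype_def btype_code_def
  by (simp, intro sum.cong refl) auto

lemma Hpoly_2_0_sign_sum: "Hpoly n 2 0 = of_int (\<Sum>A\<in>Pow (sigma_edges n). sub_sign n A)"
  unfolding Hpoly_def weight_2_0 by simp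

lemma Hpoly_2_0: "Hpoly n 2 0 = of_int (type_sum n 0 + 3 * type_sum n 1 + type_sum n 4)"
proof -
  have "(\<Sum>k<5. type_sum n k) = (\<Sum>A\<in>Pow (sigma_edges n). \<Sum>k<5. if btype n A = k then sub_sign n A else 0)"
    unfolding type_sum_def by (rule sum.swap)
  also have "\<dots> = (\<Sum>A\<in>Pow (sigma_edges n). sub_sign n A)"
    using btype_lt by (intro sum.cong refl) simp
  finally have "(\<Sum>A\<in>Pow (sigma_edges n). sub_sign n A) = type_sum n 0 + 3 * type_sum n 1 + type_sum n 4"
    using type_sum_mixed[of n] unfolding sum_lessThan_5 by simp
  then show ?thesis unfolding Hpoly_2_0_sign_sum by (rule arg_cong)
qed

theorem proposition4p11:
  fixes n :: nat
  assumes "n \<ge> 1"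
  shows "real (card (acyclic_orientations n)) = Hpoly n 2 0
    \<and> Hpoly n 2 0 = H2poly n 2 0 + 3 * Npoly n 2 0 + Mpoly n 2 0
    \<and> Hpoly (n + 1) 2 0 = (2 * Hpoly n 2 0) ^ 3 - 2 * (H2poly n 2 0 + Npoly n 2 0) ^ 3
    \<and> (let H2 = H2poly n 2 0; N = Npoly n 2 0; M = Mpoly n 2 0 in
         H2poly (n + 1) 2 0 = 2 * H2^3 + 12 * H2^2 * N + 6 * H2 * N^2
       \<and> Npoly (n + 1) 2 0 = H2^3 + 11 * H2^2 * N + 4 * H2^2 * M + 28 * H2 * N^2
            + 8 * H2 * N * M + 14 * N^3 + 4 * N^2 * M
       \<and> Mpoly (n + 1) 2 0 = H2^3 + 21 * H2^2 * N + 12 * H2^2 * M + 120 * H2 * N^2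
            + 120 * H2 * N * M + 24 * H2 * M^2 + 172 * N^3 + 204 * N^2 * M
            + 72 * N * M^2 + 8 * M^3)
    \<and> H2poly 1 2 0 = 2 \<and> Npoly 1 2 0 = 1 \<and> Mpoly 1 2 0 = 1"
proof -
  have count: "real (card (acyclic_orientations n)) = Hpoly n 2 0"
    unfolding Hpoly_2_0_sign_sum card_acyclic_orientations[symmetric] by simp
  have initial: "type_sum 1 0 = 2" "type_sum 1 1 = 1" "type_sum 1 4 = 1"
    using type_sums_Suc[of 0] by (simp_all add: type_sum_0)
  show ?thesis
    unfolding Let_def Suc_eq_plus1[symmetric] count Hpoly_2_0 H2poly_2_0 Npoly_2_0 Mpoly_2_0
      type_sums_Suc initial
    by (simp add: algebra_simps power2_eq_square power3_eq_cube)
qed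

end
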